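(* Let $L$ be a Lie algebra over $\mathbb{C}$ with a countable basis, and let $V_1,V_2$ be $L$-modules. Suppose that one of the following conditions holds: (1) $V_1$ is simple and $\mathrm{ann}_L(v)+\mathrm{ann}_L(S)=L$ for all $v\in V_1$ and all finite subsets $S\subset V_2$; (2) for every finite subset $S\subset V_2$, $V_1$ is a simple $\mathrm{ann}_L(S)$-module. Then (a) every submodule of $V_1\otimes V_2$ is of the form $V_1\otimes V_2'$ for some submodule $V_2'$ of $V_2$; and (b) if $V_1$ and $V_2$ are simple, then $V_1\otimes V_2$ is simple.
   Context: For an $L$-module $V$ and $v\in V$, $\mathrm{ann}_L(v)=\{g\in L\mid gv=0\}$, and for $S\subset V$, $\mathrm{ann}_L(S)=\bigcap_{v\in S}\mathrm{ann}_L(v)$. $V_1\otimes V_2$ carries the usual tensor product $L$-module structure $g(v_1\otimes v_2)=gv_1\otimes v_2+v_1\otimes gv_2$. *)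

theory Defs
  imports Complex_Main "HOL-Library.Countable_Set"
begin

text \<open>Complex vector spaces are given by explicit scalar multiplications
  (HOL has no class of complex vector spaces); the underlying sets are the whole types.\<close>

definition bilinear_map ::
  "(complex \<Rightarrow> 'a::ab_group_add \<Rightarrow> 'a) \<Rightarrow> (complex \<Rightarrow> 'b::ab_group_add \<Rightarrow> 'b)
   \<Rightarrow> (complex \<Rightarrow> 'c::ab_group_add \<Rightarrow> 'c) \<Rightarrow> ('a \<Rightarrow> 'b \<Rightarrow> 'c) \<Rightarrow> bool" where
  "bilinear_map sa sb sc f \<longleftrightarrow>
     (\<forall>x. Vector_Spaces.linear sb sc (f x)) \<and> (\<forall>y. Vector_Spaces.linear sa sc (\<lambda>x. f x y))"

definition lie_algebra :: "(complex \<Rightarrow> 'l::ab_group_add \<Rightarrow> 'l) \<Rightarrow> ('l \<Rightarrow> 'l \<Rightarrow> 'l) \<Rightarrow> bool" where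
  "lie_algebra sL br \<longleftrightarrow> vector_space sL \<and> bilinear_map sL sL sL br \<and>
     (\<forall>x. br x x = 0) \<and>
     (\<forall>x y z. br x (br y z) + br y (br z x) + br z (br x y) = 0)"

definition countable_basis :: "(complex \<Rightarrow> 'l::ab_group_add \<Rightarrow> 'l) \<Rightarrow> bool" where
  "countable_basis sL \<longleftrightarrow>
     (\<exists>B. countable B \<and> \<not> module.dependent sL B \<and> module.span sL B = UNIV)"

definition lie_module ::
  "(complex \<Rightarrow> 'l::ab_group_add \<Rightarrow> 'l) \<Rightarrow> ('l \<Rightarrow> 'l \<Rightarrow> 'l)
   \<Rightarrow> (complex \<Rightarrow> 'v::ab_group_add \<Rightarrow> 'v) \<Rightarrow> ('l \<Rightarrow> 'v \<Rightarrow> 'v) \<Rightarrow> bool" where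
  "lie_module sL br sV act \<longleftrightarrow> vector_space sV \<and> bilinear_map sL sV sV act \<and>
     (\<forall>x y v. act (br x y) v = act x (act y v) - act y (act x v))"

definition ann :: "('l \<Rightarrow> 'v \<Rightarrow> 'v::zero) \<Rightarrow> 'v \<Rightarrow> 'l set" where
  "ann act v = {g. act g v = 0}"

definition ann_set :: "('l \<Rightarrow> 'v \<Rightarrow> 'v::zero) \<Rightarrow> 'v set \<Rightarrow> 'l set" where
  "ann_set act S = {g. \<forall>v\<in>S. act g v = 0}"

text \<open>Submodule of V for the action restricted to the subset A of L
  (A = UNIV: L-submodule; A = a subalgebra: submodule for that subalgebra).\<close>
definition submodule ::
  "(complex \<Rightarrow> 'v::ab_group_add \<Rightarrow> 'v) \<Rightarrow> ('l \<Rightarrow> 'v \<Rightarrow> 'v) \<Rightarrow> 'l set \<Rightarrow> 'v set \<Rightarrow> bool" where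
  "submodule sV act A U \<longleftrightarrow> module.subspace sV U \<and> (\<forall>g\<in>A. \<forall>u\<in>U. act g u \<in> U)"

definition simple_module ::
  "(complex \<Rightarrow> 'v::ab_group_add \<Rightarrow> 'v) \<Rightarrow> ('l \<Rightarrow> 'v \<Rightarrow> 'v) \<Rightarrow> 'l set \<Rightarrow> bool" where
  "simple_module sV act A \<longleftrightarrow> (\<exists>v::'v. v \<noteq> 0) \<and>
     (\<forall>U. submodule sV act A U \<longrightarrow> U = {0} \<or> U = UNIV)"

text \<open>(W, tens) is a tensor product of V1 and V2: tens is bilinear, W is spanned by
  the pure tensors, and every bilinear form on V1 x V2 factors through a linear
  functional on W (universal property for scalar targets, equivalent over a field).\<close>
definition is_tensor_product ::
  "(complex \<Rightarrow> 'a::ab_group_add \<Rightarrow> 'a) \<Rightarrow> (complex \<Rightarrow> 'b::ab_group_add \<Rightarrow> 'b)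
   \<Rightarrow> (complex \<Rightarrow> 'w::ab_group_add \<Rightarrow> 'w) \<Rightarrow> ('a \<Rightarrow> 'b \<Rightarrow> 'w) \<Rightarrow> bool" where
  "is_tensor_product s1 s2 sW tens \<longleftrightarrow> vector_space sW \<and> bilinear_map s1 s2 sW tens \<and>
     module.span sW {tens x y | x y. True} = UNIV \<and>
     (\<forall>B::'a \<Rightarrow> 'b \<Rightarrow> complex. bilinear_map s1 s2 (*) B \<longrightarrow>
        (\<exists>\<phi>. Vector_Spaces.linear sW (*) \<phi> \<and> (\<forall>x y. \<phi> (tens x y) = B x y)))"

end

theory Submission
  imports Defs "HOL-Analysis.Continuum_Not_Denumerable"
    "HOL-Computational_Algebra.Fundamental_Theorem_Algebra"
    "HOL-Library.Function_Algebras"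
begin

text \<open>
  Hypothesis (1) implies (2): every \<open>g \<in> L\<close> is \<open>a + b\<close> with \<open>a v = 0\<close> and \<open>b \<in> ann(S)\<close>, so an
  \<open>ann(S)\<close>-submodule of \<open>V\<^sub>1\<close> is already an \<open>L\<close>-submodule. Under (2), \<open>V\<^sub>1\<close> has countable
  dimension, so by Dixmier's version of Schur's lemma every \<open>ann(S)\<close>-endomorphism of \<open>V\<^sub>1\<close> is a
  scalar: otherwise all \<open>\<phi> - c\<close> are bijective and the vectors \<open>(\<phi> - c)\<^sup>-\<^sup>1 v\<close> form an uncountable
  independent family.

  Given a submodule \<open>U\<close> of \<open>V\<^sub>1 \<otimes> V\<^sub>2\<close>, let \<open>V\<^sub>2' = {w. V\<^sub>1 \<otimes> w \<subseteq> U}\<close>. An element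
  \<open>\<Sum>i. x i \<otimes> w i\<close> of \<open>U\<close> lies in \<open>V\<^sub>1 \<otimes> V\<^sub>2'\<close> by induction on the number of terms: the
  coefficient tuples \<open>y\<close> with \<open>\<Sum>i. y i \<otimes> w i \<in> U\<close> form an \<open>ann(w ` I)\<close>-submodule \<open>M\<close> of
  \<open>V\<^sub>1\<^sup>I\<close>. If some \<open>y \<in> M\<close> vanishes at \<open>n\<close> but not everywhere, simplicity splits \<open>x\<close> into two
  tuples of \<open>M\<close> with a zero coordinate each. Otherwise \<open>y \<mapsto> y n\<close> is injective on \<open>M\<close>, the
  coordinates of its inverse are scalars \<open>c i\<close>, and the sum equals \<open>x n \<otimes> \<Sum>i. c i w i\<close>
  with \<open>\<Sum>i. c i w i \<in> V\<^sub>2'\<close>. Part (b) follows since \<open>V\<^sub>2'\<close> is \<open>0\<close> or \<open>V\<^sub>2\<close> and \<open>x \<otimes> y \<noteq> 0\<close>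
  for nonzero \<open>x, y\<close>.
\<close>

section \<open>Dixmier's lemma\<close>

lemma (in vector_space) countable_independent_if_countable_span:
  assumes C: "countable C" and span_C: "span C = UNIV" and I: "independent I"
  shows "countable I"
proof -
  have "I \<subseteq> (\<Union>F\<in>{F. finite F \<and> F \<subseteq> C}. I \<inter> span F)"
  proof
    fix x assume x: "x \<in> I"
    have "x \<in> span C" using span_C by auto
    then obtain t r where t: "finite t" "t \<subseteq> C" "x = (\<Sum>a\<in>t. r a *s a)"
      unfolding span_explicit by blast
    have "x \<in> span t" unfolding t(3) by (intro span_sum span_scale span_base)
    with t x show "x \<in> (\<Union>F\<in>{F. finite F \<and> F \<subseteq> C}. I \<inter> span F)" by blast
  qed
  moreover have "countable (\<Union>F\<in>{F. finite F \<and> F \<subseteq> C}. I \<inter> span F)"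
  proof (rule countable_UN)
    show "countable {F. finite F \<and> F \<subseteq> C}" using countable_Collect_finite_subset[OF C] .
    fix F assume "F \<in> {F. finite F \<and> F \<subseteq> C}"
    then have "finite (I \<inter> span F)"
      using independent_span_bound[of F "I \<inter> span F"] independent_mono[OF I] by auto
    then show "countable (I \<inter> span F)" by (rule countable_finite)
  qed
  ultimately show ?thesis using countable_subset by blast
qed

locale endomorphism = Vector_Spaces.linear s s \<phi>
  for s :: "complex \<Rightarrow> 'v::ab_group_add \<Rightarrow> 'v" (infixr \<open>*s\<close> 75) and \<phi> :: "'v \<Rightarrow> 'v"
begin

lemma linear_funpow: "Vector_Spaces.linear s s (\<phi> ^^ k)"
  by (induction k)
    (simp_all only: funpow.simps vs1.linear_id Vector_Spaces.linear_compose[OF _ linear_axioms])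

definition peval :: "complex poly \<Rightarrow> 'v \<Rightarrow> 'v" where
  "peval p x = (\<Sum>k\<le>degree p. coeff p k *s (\<phi> ^^ k) x)"

interpretation pair: vector_space_pair s s ..

lemma linear_peval: "Vector_Spaces.linear s s (peval p)"
  unfolding peval_def
  by (intro pair.linear_compose_sum ballI pair.linear_compose_scale_right linear_funpow)

lemma peval_degree_bound:
  "degree p \<le> N \<Longrightarrow> peval p x = (\<Sum>k\<le>N. coeff p k *s (\<phi> ^^ k) x)"
  unfolding peval_def by (rule sum.mono_neutral_left) (auto simp: coeff_eq_0)

lemma peval_add: "peval (p + q) x = peval p x + peval q x"
proof -
  let ?N = "max (degree p) (degree q)"
  have "peval (p + q) x = (\<Sum>k\<le>?N. coeff (p + q) k *s (\<phi> ^^ k) x)"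
    by (rule peval_degree_bound) (simp add: degree_add_le)
  also have "\<dots> = (\<Sum>k\<le>?N. coeff p k *s (\<phi> ^^ k) x) + (\<Sum>k\<le>?N. coeff q k *s (\<phi> ^^ k) x)"
    by (simp add: vs1.scale_left_distrib sum.distrib)
  also have "\<dots> = peval p x + peval q x"
    using peval_degree_bound[of p ?N x] peval_degree_bound[of q ?N x] by simp
  finally show ?thesis .
qed

lemma peval_0 [simp]: "peval 0 x = 0"
  by (simp add: peval_def)

lemma peval_sum: "peval (sum f A) x = (\<Sum>a\<in>A. peval (f a) x)"
  by (induction A rule: infinite_finite_induct) (simp_all add: peval_add)

lemma peval_smult: "peval (smult c p) x = c *s peval p x"
proof -
  have "peval (smult c p) x = (\<Sum>k\<le>degree p. coeff (smult c p) k *s (\<phi> ^^ k) x)"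
    by (rule peval_degree_bound) (simp add: degree_smult_le)
  then show ?thesis
    by (simp add: peval_def vs1.scale_sum_right)
qed

lemma peval_pCons: "peval (pCons a p) x = a *s x + \<phi> (peval p x)"
proof -
  have "peval (pCons a p) x = (\<Sum>k\<le>Suc (degree p). coeff (pCons a p) k *s (\<phi> ^^ k) x)"
    by (rule peval_degree_bound) simp
  also have "\<dots> = a *s x + (\<Sum>k\<le>degree p. coeff p k *s (\<phi> ^^ Suc k) x)"
    by (subst sum.atMost_Suc_shift) simp
  also have "\<dots> = a *s x + \<phi> (peval p x)"
    by (simp add: peval_def sum scale)
  finally show ?thesis .
qed

lemma peval_mult: "peval (p * q) x = peval p (peval q x)"
proof (induction p)
  case 0
  then show ?case by simp
next
  case (pCons a p)
  then show ?case by (simp add: peval_add peval_smult peval_pCons)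
qed

lemma peval_linear_factor: "peval [:-c, 1:] x = \<phi> x - c *s x"
  by (simp add: peval_pCons peval_def vs1.scale_minus_left)

text \<open>Over \<open>\<complex>\<close> every polynomial splits into linear factors, so \<open>peval p\<close> is a
  composition of maps \<open>\<phi> - c\<close>.\<close>
lemma inj_peval:
  assumes inj_shift: "\<And>c. inj (\<lambda>x. \<phi> x - c *s x)" and "p \<noteq> 0"
  shows "inj (peval p)"
  using \<open>p \<noteq> 0\<close>
proof (induction "degree p" arbitrary: p rule: less_induct)
  case less
  show ?case
  proof (cases "degree p = 0")
    case True
    then obtain c where "p = [:c:]" "c \<noteq> 0"
      using less.prems by (metis degree_eq_zeroE pCons_0_0)
    then show ?thesis by (auto simp: peval_def inj_on_def)
  next
    case False
    then obtain z where "poly p z = 0"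
      using fundamental_theorem_of_algebra constant_degree by metis
    then obtain q where q: "p = [:-z, 1:] * q"
      by (metis dvdE poly_eq_0_iff_dvd)
    with less.prems have "q \<noteq> 0" by auto
    then have "degree p = degree q + 1"
      unfolding q using degree_mult_eq[of "[:-z, 1:]" q] by simp
    with \<open>q \<noteq> 0\<close> have "inj (peval q)" using less.hyps by auto
    moreover have "peval p = (\<lambda>x. \<phi> x - z *s x) \<circ> peval q"
      unfolding q by (rule ext) (simp only: comp_def peval_mult peval_linear_factor)
    ultimately show ?thesis using inj_shift inj_compose by metis
  qed
qed

context
  fixes R :: "complex \<Rightarrow> 'v" and v :: 'v
  assumes inj_shift: "\<And>c. inj (\<lambda>x. \<phi> x - c *s x)"
    and resolvent: "\<And>c. \<phi> (R c) - c *s R c = v"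
    and "v \<noteq> 0"
begin

text \<open>Applying \<open>\<Prod>l\<in>L. (\<phi> - l)\<close> to a relation among the \<open>R l\<close> yields
  \<open>p(\<phi>) v = 0\<close> for the Lagrange-type polynomial \<open>p\<close> below, so \<open>p = 0\<close>.\<close>
lemma resolvent_combination_eq_0:
  assumes "finite L" and comb: "(\<Sum>l\<in>L. u l *s R l) = 0" and "m \<in> L"
  shows "u m = 0"
proof -
  define P where "P (K :: complex set) = (\<Prod>k\<in>K. [:-k, 1:])" for K
  define p where "p = (\<Sum>l\<in>L. smult (u l) (P (L - {l})))"
  have P_resolvent: "peval (P L) (R l) = peval (P (L - {l})) v" if "l \<in> L" for l
  proof -
    have "P L = P (L - {l}) * [:-l, 1:]"
      unfolding P_def using \<open>finite L\<close> that by (simp add: prod.remove mult.commute)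
    then show ?thesis
      by (simp only: peval_mult peval_linear_factor resolvent)
  qed
  have "peval p v = peval (P L) (\<Sum>l\<in>L. u l *s R l)"
    unfolding p_def
    by (simp add: peval_sum peval_smult P_resolvent pair.linear_sum[OF linear_peval]
        pair.linear_scale[OF linear_peval])
  also have "\<dots> = 0"
    by (simp add: comb pair.linear_0[OF linear_peval])
  finally have "peval p v = 0" .
  then have "p = 0"
    using inj_peval[OF inj_shift] \<open>v \<noteq> 0\<close> pair.linear_0[OF linear_peval] by (metis injD)
  have "0 = poly p m"
    using \<open>p = 0\<close> by simp
  also have "\<dots> = (\<Sum>l\<in>L. u l * (\<Prod>k\<in>L - {l}. m - k))"
    unfolding p_def P_def by (simp add: poly_sum poly_prod)
  also have "\<dots> = u m * (\<Prod>k\<in>L - {m}. m - k)"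
    using \<open>finite L\<close> \<open>m \<in> L\<close>
    by (subst sum.remove[of _ m]) (auto intro!: sum.neutral prod_zero)
  finally show "u m = 0"
    using \<open>finite L\<close> by simp
qed

lemma inj_resolvent: "inj R"
proof (rule injI)
  fix a b assume "R a = R b"
  show "a = b"
  proof (rule ccontr)
    assume "a \<noteq> b"
    then have "(\<Sum>l\<in>{a, b}. (if l = a then 1 else -1) *s R l) = 0"
      using \<open>R a = R b\<close> by (simp add: vs1.scale_minus_left)
    from resolvent_combination_eq_0[OF _ this, of a] show False by simp
  qed
qed

lemma independent_range_resolvent: "vs1.independent (range R)"
  unfolding vs1.independent_explicit_finite_subsets
proof (intro allI impI ballI)
  fix T u y
  assume T: "T \<subseteq> range R" "finite T" and comb: "(\<Sum>y\<in>T. u y *s y) = 0" and "y \<in> T"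
  have T_eq: "R ` (R -` T) = T"
    using T(1) by (simp add: image_vimage_eq Int_absorb2)
  have "finite (R -` T)"
    using T(2) inj_resolvent by (simp add: finite_vimageI)
  moreover have "(\<Sum>l\<in>R -` T. u (R l) *s R l) = (\<Sum>y\<in>T. u y *s y)"
    using sum.reindex[OF inj_on_subset[OF inj_resolvent subset_UNIV], of "\<lambda>y. u y *s y" "R -` T"]
    by (simp only: T_eq comp_def)
  moreover obtain l where "l \<in> R -` T" "y = R l"
    using \<open>y \<in> T\<close> T(1) by blast
  ultimately show "u y = 0"
    using resolvent_combination_eq_0 comb by metis
qed

end

lemma exists_shift_not_bij:
  fixes v :: 'v
  assumes "countable C" "vs1.span C = UNIV" "v \<noteq> 0"
  shows "\<exists>c. \<not> bij (\<lambda>x. \<phi> x - c *s x)"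
proof (rule ccontr)
  assume "\<not> ?thesis"
  then have bij_shift: "bij (\<lambda>x. \<phi> x - c *s x)" for c
    by blast
  define R where "R c = inv (\<lambda>x. \<phi> x - c *s x) v" for c
  have "\<phi> (R c) - c *s R c = v" for c
    unfolding R_def using surj_f_inv_f[OF bij_is_surj[OF bij_shift[of c]], of v] by simp
  with bij_shift \<open>v \<noteq> 0\<close> have "vs1.independent (range R)" "inj R"
    using independent_range_resolvent inj_resolvent bij_is_inj by blast+
  then have "countable (UNIV :: complex set)"
    using vs1.countable_independent_if_countable_span[OF assms(1,2)]
    by (metis countable_image_inj_eq)
  then show False
    using uncountable_UNIV_complex by blast
qed

end

lemma simple_module_commuting_eq_0_or_bij:
  assumes "vector_space s" "simple_module s act A"
    and act_linear: "\<forall>g\<in>A. Vector_Spaces.linear s s (act g)"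
    and \<psi>_linear: "Vector_Spaces.linear s s \<psi>"
    and commute: "\<forall>g\<in>A. \<forall>x. \<psi> (act g x) = act g (\<psi> x)"
  shows "(\<forall>x. \<psi> x = 0) \<or> bij \<psi>"
proof -
  interpret vector_space s by fact
  interpret pair: vector_space_pair s s ..
  have simple: "U = {0} \<or> U = UNIV" if "submodule s act A U" for U
    using \<open>simple_module s act A\<close> that unfolding simple_module_def by blast
  have "submodule s act A {x. \<psi> x = 0}"
    using pair.linear_subspace_kernel[OF \<psi>_linear] commute pair.linear_0 act_linear
    unfolding submodule_def by auto
  then consider "{x. \<psi> x = 0} = UNIV" | "{x. \<psi> x = 0} = {0}"
    using simple by blast
  then show ?thesis
  proof cases
    case 1
    then show ?thesis by auto
  next
    case 2
    then have "inj \<psi>"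
      using pair.linear_inj_iff_eq_0[OF \<psi>_linear] by auto
    have "submodule s act A (range \<psi>)"
      using pair.linear_subspace_image[OF \<psi>_linear subspace_UNIV] commute
      unfolding submodule_def by (metis rangeE rangeI)
    then consider "range \<psi> = UNIV" | "range \<psi> = {0}"
      using simple by blast
    then show ?thesis
      using \<open>inj \<psi>\<close> by cases (auto simp: bij_def)
  qed
qed

text \<open>Schur's lemma in Dixmier's form: countable dimension replaces finite dimension.\<close>
lemma simple_module_commuting_scalar:
  assumes vs: "vector_space s" and "countable C" "module.span s C = UNIV"
    and simple: "simple_module s act A"
    and act_linear: "\<forall>g\<in>A. Vector_Spaces.linear s s (act g)"
    and \<phi>_linear: "Vector_Spaces.linear s s \<phi>"
    and commute: "\<forall>g\<in>A. \<forall>x. \<phi> (act g x) = act g (\<phi> x)"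
  shows "\<exists>c. \<forall>x. \<phi> x = s c x"
proof -
  interpret endomorphism s \<phi>
    by (simp add: endomorphism_def \<phi>_linear)
  interpret pair: vector_space_pair s s ..
  obtain v :: 'a where "v \<noteq> 0"
    using simple unfolding simple_module_def by blast
  then obtain c where not_bij: "\<not> bij (\<lambda>x. \<phi> x - s c x)"
    using exists_shift_not_bij assms(2,3) by blast
  have "Vector_Spaces.linear s s (\<lambda>x. \<phi> x - s c x)"
    by (intro pair.linear_compose_sub \<phi>_linear vs1.linear_scale_self)
  moreover have "\<forall>g\<in>A. \<forall>x. \<phi> (act g x) - s c (act g x) = act g (\<phi> x - s c x)"
    using commute act_linear by (simp add: pair.linear_diff pair.linear_scale)
  ultimately have "\<forall>x. \<phi> x - s c x = 0"
    using simple_module_commuting_eq_0_or_bij[OF vs simple act_linear] not_bij by blast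
  then show ?thesis
    by auto
qed

section \<open>Submodules of powers of a simple module\<close>

definition pointwise_submodule ::
  "(complex \<Rightarrow> 'v::ab_group_add \<Rightarrow> 'v) \<Rightarrow> ('l \<Rightarrow> 'v \<Rightarrow> 'v) \<Rightarrow> 'l set \<Rightarrow> ('i \<Rightarrow> 'v) set \<Rightarrow> bool"
  where "pointwise_submodule s act A M \<longleftrightarrow> submodule (\<lambda>c y i. s c (y i)) (\<lambda>g y i. act g (y i)) A M"

lemma vector_space_pointwise:
  assumes "vector_space s"
  shows "vector_space (\<lambda>c (y :: 'i \<Rightarrow> 'v::ab_group_add) i. s c (y i))"
proof -
  interpret vector_space s by fact
  show ?thesis
    by unfold_locales (simp_all add: fun_eq_iff scale_right_distrib scale_left_distrib)
qed

context
  fixes s :: "complex \<Rightarrow> 'v::ab_group_add \<Rightarrow> 'v" and act :: "'l \<Rightarrow> 'v \<Rightarrow> 'v" and A :: "'l set"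
  assumes vs: "vector_space s" and act_linear: "\<forall>g\<in>A. Vector_Spaces.linear s s (act g)"
begin

interpretation vs: vector_space s by (rule vs)
interpretation pw: vector_space "\<lambda>c (y :: 'i \<Rightarrow> 'v) i. s c (y i)"
  by (rule vector_space_pointwise[OF vs])
interpretation pair: vector_space_pair s s ..

context
  fixes M :: "('i \<Rightarrow> 'v) set"
  assumes M: "pointwise_submodule s act A M"
begin

lemma pointwise_subspace: "pw.subspace M"
  using M unfolding pointwise_submodule_def submodule_def by blast

lemma pointwise_submodule_diff: "y \<in> M \<Longrightarrow> y' \<in> M \<Longrightarrow> y - y' \<in> M"
  using pw.subspace_diff[OF pointwise_subspace] .

lemma pointwise_submodule_act: "y \<in> M \<Longrightarrow> g \<in> A \<Longrightarrow> (\<lambda>i. act g (y i)) \<in> M"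
  using M unfolding pointwise_submodule_def submodule_def by blast

lemma submodule_coordinate_image: "submodule s act A ((\<lambda>y. y i) ` M)"
  unfolding submodule_def vs.subspace_def
proof (intro conjI ballI allI)
  show "0 \<in> (\<lambda>y. y i) ` M"
    using pw.subspace_0[OF pointwise_subspace] by (force intro: rev_image_eqI)
  fix a b c g
  assume "a \<in> (\<lambda>y. y i) ` M" "b \<in> (\<lambda>y. y i) ` M"
  then obtain ya yb where y: "ya \<in> M" "yb \<in> M" "a = ya i" "b = yb i"
    by blast
  show "a + b \<in> (\<lambda>y. y i) ` M"
    using pw.subspace_add[OF pointwise_subspace y(1,2)] y(3,4) by (force intro: rev_image_eqI)
  show "s c a \<in> (\<lambda>y. y i) ` M"
    using pw.subspace_scale[OF pointwise_subspace y(1)] y(3) by (force intro: rev_image_eqI)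
  show "act g a \<in> (\<lambda>y. y i) ` M" if "g \<in> A"
    using pointwise_submodule_act[OF y(1) that] y(3) by (force intro: rev_image_eqI)
qed

lemma pointwise_submodule_coordinate_eq_0: "pointwise_submodule s act A {y \<in> M. y n = 0}"
  unfolding pointwise_submodule_def submodule_def pw.subspace_def
proof (intro conjI ballI allI)
  show "0 \<in> {y \<in> M. y n = 0}"
    using pw.subspace_0[OF pointwise_subspace] by simp
  fix c g and y y' assume y: "y \<in> {y \<in> M. y n = 0}" and "y' \<in> {y \<in> M. y n = 0}"
  then show "y + y' \<in> {y \<in> M. y n = 0}"
    using pw.subspace_add[OF pointwise_subspace] by simp
  show "(\<lambda>i. s c (y i)) \<in> {y \<in> M. y n = 0}"
    using pw.subspace_scale[OF pointwise_subspace] y by simp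
  show "(\<lambda>i. act g (y i)) \<in> {y \<in> M. y n = 0}" if "g \<in> A"
    using pointwise_submodule_act[OF _ that] pair.linear_0 act_linear that y by simp
qed

lemma pointwise_submodule_eq_on_if_eq_at:
  assumes inj: "\<forall>y\<in>M. y n = 0 \<longrightarrow> (\<forall>i\<in>I. y i = 0)"
    and "y \<in> M" "y' \<in> M" "y n = y' n" "i \<in> I"
  shows "y i = y' i"
proof -
  have "y - y' \<in> M" "(y - y') n = 0"
    using pointwise_submodule_diff[OF assms(2,3)] assms(4) by simp_all
  then have "(y - y') i = 0"
    using inj \<open>i \<in> I\<close> by blast
  then show ?thesis
    by simp
qed

context
  fixes C :: "'v set" and I :: "'i set" and n :: 'i
  assumes C: "countable C" "vs.span C = UNIV" and simple: "simple_module s act A"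
begin

text \<open>If \<open>y \<mapsto> y n\<close> is a bijection from \<open>M\<close> onto \<open>V\<close> on the coordinates in \<open>I\<close>, each
  coordinate of its inverse is an \<open>A\<close>-endomorphism of \<open>V\<close>, hence a scalar.\<close>
lemma pointwise_submodule_scalar_profile:
  assumes inj: "\<forall>y\<in>M. y n = 0 \<longrightarrow> (\<forall>i\<in>I. y i = 0)" and surj: "(\<lambda>y. y n) ` M = UNIV"
  shows "\<exists>c. \<forall>y\<in>M. \<forall>i\<in>I. y i = s (c i) (y n)"
proof -
  define Y where "Y z = (SOME y. y \<in> M \<and> y n = z)" for z
  have Y: "Y z \<in> M \<and> Y z n = z" for z
  proof -
    have "z \<in> (\<lambda>y. y n) ` M"
      using surj by blast
    then have "\<exists>y. y \<in> M \<and> y n = z"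
      by blast
    then show ?thesis
      unfolding Y_def by (rule someI_ex)
  qed
  have Y_unique: "y i = Y (y n) i" if "y \<in> M" "i \<in> I" for y i
    using pointwise_submodule_eq_on_if_eq_at[OF inj that(1) conjunct1[OF Y] _ that(2)] Y by simp
  have "\<exists>c. \<forall>z. Y z i = s c z" if "i \<in> I" for i
  proof (rule simple_module_commuting_scalar[OF vs C simple act_linear])
    have "Y (a + b) i = Y a i + Y b i" for a b
    proof -
      have "Y a + Y b \<in> M"
        using pw.subspace_add[OF pointwise_subspace] Y by blast
      from Y_unique[OF this that] show ?thesis
        using Y by simp
    qed
    moreover have "Y (s c a) i = s c (Y a i)" for c a
    proof -
      have "(\<lambda>i. s c (Y a i)) \<in> M"
        using pw.subspace_scale[OF pointwise_subspace] Y by blast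
      from Y_unique[OF this that] show ?thesis
        using Y by simp
    qed
    ultimately show "Vector_Spaces.linear s s (\<lambda>z. Y z i)"
      unfolding Vector_Spaces.linear_iff using vs by blast
    show "\<forall>g\<in>A. \<forall>z. Y (act g z) i = act g (Y z i)"
    proof (intro ballI allI)
      fix g z assume "g \<in> A"
      then have "(\<lambda>i. act g (Y z i)) \<in> M"
        using pointwise_submodule_act Y by blast
      from Y_unique[OF this that] show "Y (act g z) i = act g (Y z i)"
        using Y by simp
    qed
  qed
  then obtain c where c: "\<forall>i\<in>I. \<forall>z. Y z i = s (c i) z"
    using bchoice[of I "\<lambda>i c. \<forall>z. Y z i = s c z"] by blast
  show ?thesis
    using Y_unique c by metis
qed

end

end

end

lemma coordinate_image_eq_0_or_UNIV:
  assumes "vector_space s" "\<forall>g\<in>A. Vector_Spaces.linear s s (act g)"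
    and "simple_module s act A" "pointwise_submodule s act A M"
  shows "(\<lambda>y. y i) ` M = {0} \<or> (\<lambda>y. y i) ` M = UNIV"
  using assms(3) submodule_coordinate_image[OF assms(1,2,4)] unfolding simple_module_def
  by (elim conjE allE impE)

lemma pointwise_submodule_eq_0_on_if_eq_0_at:
  assumes vs: "vector_space s" and act_linear: "\<forall>g\<in>A. Vector_Spaces.linear s s (act g)"
    and simple: "simple_module s act A" and M: "pointwise_submodule s act A M"
    and proper: "\<forall>i\<in>I. (\<lambda>y. y i) ` {y \<in> M. y n = 0} \<noteq> UNIV"
  shows "\<forall>y\<in>M. y n = 0 \<longrightarrow> (\<forall>i\<in>I. y i = 0)"
proof (intro ballI impI)
  fix y i assume "y \<in> M" "y n = 0" "i \<in> I"
  then have "y i \<in> (\<lambda>y. y i) ` {y \<in> M. y n = 0}"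
    by (intro imageI) simp
  moreover have "(\<lambda>y. y i) ` {y \<in> M. y n = 0} \<noteq> UNIV"
    using proper \<open>i \<in> I\<close> by (rule bspec)
  then have "(\<lambda>y. y i) ` {y \<in> M. y n = 0} = {0}"
    using coordinate_image_eq_0_or_UNIV[OF vs act_linear simple
        pointwise_submodule_coordinate_eq_0[OF vs act_linear M, where n = n], of i]
    by (elim disjE) simp_all
  ultimately show "y i = 0"
    by simp
qed

lemma pointwise_submodule_split_or_scalar_profile:
  assumes vs: "vector_space s" and act_linear: "\<forall>g\<in>A. Vector_Spaces.linear s s (act g)"
    and C: "countable C" "module.span s C = UNIV" and simple: "simple_module s act A"
    and M: "pointwise_submodule s act A M" and "x \<in> M" "n \<in> I"
  shows "(\<exists>y\<in>M. \<exists>j\<in>I. \<exists>k\<in>I. y j = 0 \<and> y k = x k)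
    \<or> (\<exists>c. \<forall>y\<in>M. \<forall>i\<in>I. y i = s (c i) (y n)) \<and> (\<lambda>y. y n) ` M = UNIV"
proof (cases "\<exists>i\<in>I. (\<lambda>y. y i) ` {y \<in> M. y n = 0} = UNIV")
  case True
  then obtain i where "i \<in> I" and image_UNIV: "(\<lambda>y. y i) ` {y \<in> M. y n = 0} = UNIV"
    by (rule bexE)
  have "x i \<in> (\<lambda>y. y i) ` {y \<in> M. y n = 0}"
    by (simp only: image_UNIV UNIV_I)
  then obtain y where "x i = y i" "y \<in> {y \<in> M. y n = 0}"
    by (rule imageE)
  then show ?thesis
    using \<open>i \<in> I\<close> \<open>n \<in> I\<close>
    by (intro disjI1 bexI[where x = y] bexI[where x = n] bexI[where x = i]) simp_all
next
  case False
  then have inj: "\<forall>y\<in>M. y n = 0 \<longrightarrow> (\<forall>i\<in>I. y i = 0)"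
    by (intro pointwise_submodule_eq_0_on_if_eq_0_at[OF vs act_linear simple M])
      (simp only: bex_simps(8))
  show ?thesis
  proof (cases "x n = 0")
    case True
    then show ?thesis
      using \<open>x \<in> M\<close> \<open>n \<in> I\<close>
      by (intro disjI1 bexI[where x = x] bexI[where x = n]) simp_all
  next
    case False
    have "x n \<in> (\<lambda>y. y n) ` M"
      using \<open>x \<in> M\<close> by (rule imageI)
    then have surj: "(\<lambda>y. y n) ` M = UNIV"
      using coordinate_image_eq_0_or_UNIV[OF vs act_linear simple M, of n] False
      by (metis singletonD)
    have "\<exists>c. \<forall>y\<in>M. \<forall>i\<in>I. y i = s (c i) (y n)"
      by (rule pointwise_submodule_scalar_profile[OF vs act_linear M C simple inj surj])
    with surj show ?thesis
      by (intro disjI2 conjI)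
  qed
qed

section \<open>Submodules of tensor products\<close>

locale tensor_of_modules =
  V1: vector_space s1 + V2: vector_space s2 + W: vector_space sW
  for s1 :: "complex \<Rightarrow> 'v1::ab_group_add \<Rightarrow> 'v1" and s2 :: "complex \<Rightarrow> 'v2::ab_group_add \<Rightarrow> 'v2"
    and sW :: "complex \<Rightarrow> 'w::ab_group_add \<Rightarrow> 'w" +
  fixes act1 :: "'l \<Rightarrow> 'v1 \<Rightarrow> 'v1" and act2 :: "'l \<Rightarrow> 'v2 \<Rightarrow> 'v2"
    and tens :: "'v1 \<Rightarrow> 'v2 \<Rightarrow> 'w" and actW :: "'l \<Rightarrow> 'w \<Rightarrow> 'w"
  assumes tens_bilinear: "bilinear_map s1 s2 sW tens"
    and span_tens: "W.span {tens x y | x y. True} = UNIV"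
    and act1_linear: "\<forall>g. Vector_Spaces.linear s1 s1 (act1 g)"
    and actW_linear: "\<forall>g. Vector_Spaces.linear sW sW (actW g)"
    and actW_tens: "\<forall>g v w. actW g (tens v w) = tens (act1 g v) w + tens v (act2 g w)"
begin

lemma linear_tens_left: "Vector_Spaces.linear s1 sW (\<lambda>x. tens x y)"
  and linear_tens_right: "Vector_Spaces.linear s2 sW (tens x)"
  using tens_bilinear unfolding bilinear_map_def by blast+

interpretation pair1: vector_space_pair s1 sW ..
interpretation pair2: vector_space_pair s2 sW ..
interpretation pairW: vector_space_pair sW sW ..

lemmas tens_add_left = pair1.linear_add[OF linear_tens_left]
  and tens_diff_left = pair1.linear_diff[OF linear_tens_left]
  and tens_scale_left = pair1.linear_scale[OF linear_tens_left]
  and tens_zero_left = pair1.linear_0[OF linear_tens_left]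
  and tens_zero_right = pair2.linear_0[OF linear_tens_right]
  and tens_add_right = pair2.linear_add[OF linear_tens_right]
  and tens_scale_right = pair2.linear_scale[OF linear_tens_right]
  and tens_sum_right = pair2.linear_sum[OF linear_tens_right]

lemma sum_tens_scalar_profile:
  assumes "\<forall>i\<in>I. y i = s1 (c i) z"
  shows "(\<Sum>i\<in>I. tens (y i) (w i)) = tens z (\<Sum>i\<in>I. s2 (c i) (w i))"
  using assms by (simp add: tens_sum_right tens_scale_left tens_scale_right)

lemma sum_tens_representation:
  "\<exists>I :: 'w set. \<exists>x w. finite I \<and> u = (\<Sum>i\<in>I. tens (x i) (w i))"
proof -
  have "u \<in> W.span {tens x y | x y. True}"
    using span_tens by simp
  then obtain I r where I: "finite I" "I \<subseteq> {tens x y | x y. True}" "u = (\<Sum>a\<in>I. sW (r a) a)"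
    unfolding W.span_explicit by blast
  have "\<forall>a\<in>I. \<exists>p. a = tens (fst p) (snd p)"
  proof
    fix a assume "a \<in> I"
    with I(2) obtain x y where "a = tens x y"
      by blast
    then show "\<exists>p. a = tens (fst p) (snd p)"
      by (intro exI[where x = "(x, y)"]) simp
  qed
  from bchoice[OF this] obtain p where p: "\<forall>a\<in>I. a = tens (fst (p a)) (snd (p a))"
    by (rule exE)
  have "u = (\<Sum>a\<in>I. tens (s1 (r a) (fst (p a))) (snd (p a)))"
    unfolding I(3) using p by (intro sum.cong refl) (simp add: tens_scale_left)
  with I(1) show ?thesis
    by (intro exI[where x = I] exI[where x = "\<lambda>a. s1 (r a) (fst (p a))"] exI[where x = "\<lambda>a. snd (p a)"])
      simp
qed

definition right_factor :: "'w set \<Rightarrow> 'v2 set" where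
  "right_factor U = {w. \<forall>v. tens v w \<in> U}"

context
  fixes U :: "'w set"
  assumes U: "submodule sW actW UNIV U"
begin

lemma subspace_U: "W.subspace U"
  using U unfolding submodule_def by blast

lemma actW_mem: "u \<in> U \<Longrightarrow> actW g u \<in> U"
  using U unfolding submodule_def by blast

lemma submodule_right_factor: "submodule s2 act2 UNIV (right_factor U)"
proof -
  have "tens v (act2 g w) = actW g (tens v w) - tens (act1 g v) w" for g v w
    using actW_tens by simp
  then show ?thesis
    using W.subspace_0[OF subspace_U] W.subspace_add[OF subspace_U]
      W.subspace_scale[OF subspace_U] W.subspace_diff[OF subspace_U] actW_mem
    unfolding submodule_def V2.subspace_def right_factor_def
    by (simp add: tens_zero_right tens_add_right tens_scale_right)
qed

lemma pointwise_submodule_tens_coefficients: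
  fixes w :: "'i \<Rightarrow> 'v2" and I :: "'i set"
  shows "pointwise_submodule s1 act1 (ann_set act2 (w ` I)) {y. (\<Sum>i\<in>I. tens (y i) (w i)) \<in> U}"
proof -
  interpret pw: vector_space "\<lambda>c (y :: 'i \<Rightarrow> 'v1) i. s1 c (y i)"
    by (rule vector_space_pointwise[OF V1.vector_space_axioms])
  have act: "actW g (\<Sum>i\<in>I. tens (y i) (w i)) = (\<Sum>i\<in>I. tens (act1 g (y i)) (w i))"
    if "g \<in> ann_set act2 (w ` I)" for g y
    using that actW_linear actW_tens
    by (simp add: pairW.linear_sum ann_set_def tens_zero_right)
  show ?thesis
    unfolding pointwise_submodule_def submodule_def pw.subspace_def
  proof (intro conjI ballI allI)
    show "0 \<in> {y. (\<Sum>i\<in>I. tens (y i) (w i)) \<in> U}"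
      using W.subspace_0[OF subspace_U] by (simp add: tens_zero_left)
    fix c g and y y'
    assume y: "y \<in> {y. (\<Sum>i\<in>I. tens (y i) (w i)) \<in> U}"
      and y': "y' \<in> {y. (\<Sum>i\<in>I. tens (y i) (w i)) \<in> U}"
    then show "y + y' \<in> {y. (\<Sum>i\<in>I. tens (y i) (w i)) \<in> U}"
      using W.subspace_add[OF subspace_U] by (simp add: tens_add_left sum.distrib)
    show "(\<lambda>i. s1 c (y i)) \<in> {y. (\<Sum>i\<in>I. tens (y i) (w i)) \<in> U}"
      using W.subspace_scale[OF subspace_U y[simplified], of c]
      by (simp add: tens_scale_left W.scale_sum_right)
    show "(\<lambda>i. act1 g (y i)) \<in> {y. (\<Sum>i\<in>I. tens (y i) (w i)) \<in> U}"
      if "g \<in> ann_set act2 (w ` I)"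
      using actW_mem[OF y[simplified], of g] act[OF that, of y] by simp
  qed
qed


text \<open>A scalar profile \<open>c\<close> collapses \<open>\<Sum>i. x i \<otimes> w i\<close> to \<open>x n \<otimes> \<Sum>i. c i w i\<close>, and
  surjectivity of the \<open>n\<close>-th coordinate puts \<open>V\<^sub>1 \<otimes> \<Sum>i. c i w i\<close> inside \<open>U\<close>.\<close>
lemma sum_tens_eq_tens_right_factor:
  assumes profile: "\<forall>y\<in>{y. (\<Sum>i\<in>I. tens (y i) (w i)) \<in> U}. \<forall>i\<in>I. y i = s1 (c i) (y n)"
    and surj: "(\<lambda>y. y n) ` {y. (\<Sum>i\<in>I. tens (y i) (w i)) \<in> U} = UNIV"
    and x: "(\<Sum>i\<in>I. tens (x i) (w i)) \<in> U"
  shows "\<exists>w'\<in>right_factor U. (\<Sum>i\<in>I. tens (x i) (w i)) = tens (x n) w'"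
proof -
  define w' where "w' = (\<Sum>i\<in>I. s2 (c i) (w i))"
  have "tens z w' \<in> U" for z
  proof -
    have "z \<in> (\<lambda>y. y n) ` {y. (\<Sum>i\<in>I. tens (y i) (w i)) \<in> U}"
      by (simp only: surj UNIV_I)
    then obtain y where "z = y n" and y: "y \<in> {y. (\<Sum>i\<in>I. tens (y i) (w i)) \<in> U}"
      by (rule imageE)
    then have "(\<Sum>i\<in>I. tens (y i) (w i)) = tens z w'"
      unfolding w'_def using profile by (intro sum_tens_scalar_profile) blast
    with y show ?thesis
      by simp
  qed
  then have "w' \<in> right_factor U"
    unfolding right_factor_def by blast
  moreover have "(\<Sum>i\<in>I. tens (x i) (w i)) = tens (x n) w'"
    unfolding w'_def using profile x by (intro sum_tens_scalar_profile) blast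
  ultimately show ?thesis
    by (intro bexI[where x = w'])
qed

context
  fixes C :: "'v1 set"
  assumes C: "countable C" "V1.span C = UNIV"
    and simple_ann: "\<forall>S. finite S \<longrightarrow> simple_module s1 act1 (ann_set act2 S)"
begin

lemma sum_tens_mem_span_right_factor:
  assumes "finite I" "(\<Sum>i\<in>I. tens (x i) (w i)) \<in> U"
  shows "(\<Sum>i\<in>I. tens (x i) (w i)) \<in> W.span {tens v w' | v w'. w' \<in> right_factor U}"
  using assms
proof (induction I arbitrary: x rule: finite_psubset_induct)
  case (psubset I)
  let ?T = "W.span {tens v w' | v w'. w' \<in> right_factor U}"
  define M where "M = {y. (\<Sum>i\<in>I. tens (y i) (w i)) \<in> U}"
  have M: "pointwise_submodule s1 act1 (ann_set act2 (w ` I)) M"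
    unfolding M_def by (rule pointwise_submodule_tens_coefficients)
  have "x \<in> M"
    using psubset.prems unfolding M_def by simp
  have vanishing: "(\<Sum>i\<in>I. tens (y i) (w i)) \<in> ?T" if "y \<in> M" "j \<in> I" "y j = 0" for y j
  proof -
    have "(\<Sum>i\<in>I. tens (y i) (w i)) = (\<Sum>i\<in>I - {j}. tens (y i) (w i))"
      using psubset.hyps that(2,3) by (simp add: sum.remove pair1.linear_0[OF linear_tens_left])
    moreover have "I - {j} \<subset> I"
      using that(2) by blast
    ultimately show ?thesis
      using psubset.IH \<open>y \<in> M\<close> unfolding M_def by simp
  qed
  show ?case
  proof (cases "I = {}")
    case True
    then show ?thesis by (simp add: W.span_zero)
  next
    case False
    then obtain n where "n \<in> I"
      by blast
    have simple: "simple_module s1 act1 (ann_set act2 (w ` I))"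
      using simple_ann psubset.hyps by blast
    have act1_linear': "\<forall>g\<in>ann_set act2 (w ` I). Vector_Spaces.linear s1 s1 (act1 g)"
      using act1_linear by blast
    consider (split) y j k where "y \<in> M" "j \<in> I" "k \<in> I" "y j = 0" "y k = x k"
      | (profile) c where "\<forall>y\<in>M. \<forall>i\<in>I. y i = s1 (c i) (y n)" "(\<lambda>y. y n) ` M = UNIV"
      using pointwise_submodule_split_or_scalar_profile[OF V1.vector_space_axioms act1_linear' C
          simple M \<open>x \<in> M\<close> \<open>n \<in> I\<close>] by blast
    then show ?thesis
    proof cases
      case split
      have "x - y \<in> M"
        using pointwise_submodule_diff[OF V1.vector_space_axioms act1_linear' M \<open>x \<in> M\<close> split(1)] .
      moreover have "(x - y) k = 0"
        using split(5) by simp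
      ultimately have "(\<Sum>i\<in>I. tens ((x - y) i) (w i)) \<in> ?T"
        using vanishing split(3) by blast
      moreover have "(\<Sum>i\<in>I. tens (y i) (w i)) \<in> ?T"
        using vanishing split(1,2,4) by blast
      moreover have "(\<Sum>i\<in>I. tens (x i) (w i))
          = (\<Sum>i\<in>I. tens (y i) (w i)) + (\<Sum>i\<in>I. tens ((x - y) i) (w i))"
        by (simp add: tens_diff_left sum_subtractf)
      ultimately show ?thesis
        using W.span_add by simp
    next
      case profile
      obtain w' where "w' \<in> right_factor U" and x_eq: "(\<Sum>i\<in>I. tens (x i) (w i)) = tens (x n) w'"
        using sum_tens_eq_tens_right_factor[OF profile[unfolded M_def] psubset.prems] by (rule bexE)
      then have "tens (x n) w' \<in> {tens v w' | v w'. w' \<in> right_factor U}"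
        by blast
      then show ?thesis
        unfolding x_eq by (rule W.span_base)
    qed
  qed
qed

lemma submodule_eq_span_right_factor:
  "U = W.span {tens v w | v w. w \<in> right_factor U}"
proof
  show "W.span {tens v w | v w. w \<in> right_factor U} \<subseteq> U"
    by (rule W.span_minimal) (use subspace_U in \<open>auto simp: right_factor_def\<close>)
  show "U \<subseteq> W.span {tens v w | v w. w \<in> right_factor U}"
  proof
    fix u assume "u \<in> U"
    obtain I :: "'w set" and x w where "finite I" "u = (\<Sum>i\<in>I. tens (x i) (w i))"
      using sum_tens_representation by blast
    with \<open>u \<in> U\<close> show "u \<in> W.span {tens v w | v w. w \<in> right_factor U}"
      using sum_tens_mem_span_right_factor by blast
  qed
qed

end

end

lemma simple_module_tensor:
  assumes "countable C" "V1.span C = UNIV"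
    and "\<forall>S. finite S \<longrightarrow> simple_module s1 act1 (ann_set act2 S)"
    and simple2: "simple_module s2 act2 UNIV" and "tens x y \<noteq> 0"
  shows "simple_module sW actW UNIV"
  unfolding simple_module_def
proof (intro conjI allI impI)
  show "\<exists>u :: 'w. u \<noteq> 0"
    using \<open>tens x y \<noteq> 0\<close> by blast
  fix U assume U: "submodule sW actW UNIV U"
  have U_eq: "U = W.span {tens v w | v w. w \<in> right_factor U}"
    by (rule submodule_eq_span_right_factor[OF U assms(1-3)])
  have "right_factor U = {0} \<or> right_factor U = UNIV"
    using simple2 submodule_right_factor[OF U] unfolding simple_module_def by blast
  then show "U = {0} \<or> U = UNIV"
  proof
    assume "right_factor U = {0}"
    note U_eq
    also have "W.span {tens v w | v w. w \<in> right_factor U} \<subseteq> W.span {0}"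
      using \<open>right_factor U = {0}\<close> by (intro W.span_mono) (auto simp: tens_zero_right)
    also have "W.span {0} = {0}"
      by simp
    finally show ?thesis
      using W.subspace_0[OF subspace_U[OF U]] by blast
  next
    assume "right_factor U = UNIV"
    have "UNIV = W.span {tens v w | v w. True}"
      using span_tens by simp
    also have "\<dots> \<subseteq> W.span {tens v w | v w. w \<in> right_factor U}"
      using \<open>right_factor U = UNIV\<close> by (intro W.span_mono) simp
    also note U_eq[symmetric]
    finally show ?thesis
      by blast
  qed
qed

end

lemma simple_module_if_ann_sum_eq_UNIV:
  fixes act :: "'l::ab_group_add \<Rightarrow> 'v::ab_group_add \<Rightarrow> 'v"
  assumes act_add: "\<forall>a b v. act (a + b) v = act a v + act b v"
    and simple: "simple_module s act UNIV"
    and decompose: "\<forall>v. {a + b | a b. a \<in> ann act v \<and> b \<in> B} = UNIV"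
  shows "simple_module s act B"
proof -
  have nonzero: "\<exists>v :: 'v. v \<noteq> 0" and simple_UNIV: "\<And>U. submodule s act UNIV U \<Longrightarrow> U = {0} \<or> U = UNIV"
    using simple unfolding simple_module_def by auto
  have "submodule s act UNIV U" if U: "submodule s act B U" for U
    unfolding submodule_def
  proof (intro conjI ballI)
    show "module.subspace s U"
      using U unfolding submodule_def by (rule conjunct1)
    fix g u assume "u \<in> U"
    have "g \<in> {a + b | a b. a \<in> ann act u \<and> b \<in> B}"
      using decompose by (simp only: UNIV_I)
    then obtain a b where "g = a + b" "act a u = 0" "b \<in> B"
      unfolding ann_def by blast
    then have "act g u = act b u"
      using act_add by simp
    then show "act g u \<in> U"
      using U \<open>u \<in> U\<close> \<open>b \<in> B\<close> unfolding submodule_def by simp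
  qed
  with nonzero simple_UNIV show ?thesis
    unfolding simple_module_def by blast
qed

lemma submodule_span_words:
  fixes act :: "'l::ab_group_add \<Rightarrow> 'v::ab_group_add \<Rightarrow> 'v"
  assumes "vector_space sL" "module.span sL B = UNIV" and bilinear: "bilinear_map sL s s act"
  shows "submodule s act UNIV (module.span s ((\<lambda>bs. foldr act bs v) ` lists B))"
proof -
  interpret L: vector_space sL by fact
  have act_linear: "Vector_Spaces.linear s s (act g)"
    and act_linear_L: "Vector_Spaces.linear sL s (\<lambda>g. act g v)" for g v
    using bilinear unfolding bilinear_map_def by blast+
  interpret V: vector_space s
    using act_linear unfolding Vector_Spaces.linear_iff by blast
  interpret pair: vector_space_pair s s ..
  interpret pairL: vector_space_pair sL s ..
  define C where "C = (\<lambda>bs. foldr act bs v) ` lists B"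
  have B_invariant: "act b y \<in> V.span C" if "b \<in> B" "y \<in> V.span C" for b y
    using \<open>y \<in> V.span C\<close>
  proof (induction rule: V.span_induct_alt)
    case base
    then show ?case by (simp add: pair.linear_0[OF act_linear] V.span_zero)
  next
    case (step c x z)
    obtain bs where "bs \<in> lists B" "x = foldr act bs v"
      using step(1) unfolding C_def by (rule imageE)
    then have "act b x \<in> C"
      using \<open>b \<in> B\<close> unfolding C_def by (intro image_eqI[where x = "b # bs"]) simp_all
    then show ?case
      using step(2) by (simp add: pair.linear_add[OF act_linear] pair.linear_scale[OF act_linear]
          V.span_add V.span_scale V.span_base)
  qed
  have "act g y \<in> V.span C" if "y \<in> V.span C" for g y
  proof -
    have "L.subspace {g. act g y \<in> V.span C}"
      using pairL.linear_subspace_vimage[OF act_linear_L V.subspace_span] by (simp add: vimage_def)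
    then have "L.span B \<subseteq> {g. act g y \<in> V.span C}"
      using B_invariant that by (intro L.span_minimal) auto
    then show ?thesis
      using \<open>L.span B = UNIV\<close> by auto
  qed
  then show ?thesis
    unfolding submodule_def C_def[symmetric] by auto
qed

text \<open>A simple module is spanned by the words \<open>b\<^sub>1 (\<cdots> (b\<^sub>k v))\<close> in a countable spanning set of
  \<open>L\<close> applied to any \<open>v \<noteq> 0\<close>.\<close>
lemma countable_span_if_simple_module:
  fixes act :: "'l::ab_group_add \<Rightarrow> 'v::ab_group_add \<Rightarrow> 'v"
  assumes "vector_space sL" "countable B" "module.span sL B = UNIV"
    and bilinear: "bilinear_map sL s s act" and simple: "simple_module s act UNIV"
  shows "\<exists>C. countable C \<and> module.span s C = UNIV"
proof -
  interpret V: vector_space s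
    using bilinear unfolding bilinear_map_def Vector_Spaces.linear_iff by blast
  obtain v :: 'v where "v \<noteq> 0"
    using simple unfolding simple_module_def by blast
  define C where "C = (\<lambda>bs. foldr act bs v) ` lists B"
  have "submodule s act UNIV (V.span C)"
    unfolding C_def by (rule submodule_span_words[OF assms(1,3) bilinear])
  moreover have "v \<in> V.span C"
    unfolding C_def by (intro V.span_base image_eqI[where x = "[]"]) simp_all
  ultimately have "V.span C = UNIV"
    using simple \<open>v \<noteq> 0\<close> unfolding simple_module_def by blast
  moreover have "countable C"
    unfolding C_def using \<open>countable B\<close> by simp
  ultimately show ?thesis
    by (intro exI[where x = C] conjI)
qed

lemma exists_linear_functional_eq_1:
  assumes "vector_space s" "v \<noteq> 0"
  shows "\<exists>f. Vector_Spaces.linear s (*) f \<and> f v = (1 :: complex)"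
proof -
  have "vector_space ((*) :: complex \<Rightarrow> complex \<Rightarrow> complex)"
    by unfold_locales (simp_all add: algebra_simps)
  with assms(1) interpret vector_space_pair s "(*) :: complex \<Rightarrow> complex \<Rightarrow> complex"
    by (simp add: vector_space_pair_def)
  have "vs1.independent {v}"
    using \<open>v \<noteq> 0\<close> by simp
  from linear_independent_extend[OF this, of "\<lambda>_. 1"] show ?thesis
    by auto
qed

lemma tens_neq_0_if_tensor_product:
  assumes "is_tensor_product s1 s2 sW tens" "vector_space s1" "vector_space s2"
    and "x \<noteq> 0" "y \<noteq> 0"
  shows "tens x y \<noteq> 0"
proof -
  obtain f1 f2 where f: "Vector_Spaces.linear s1 (*) f1" "f1 x = 1" "Vector_Spaces.linear s2 (*) f2" "f2 y = 1"
    using exists_linear_functional_eq_1 assms(2-5) by metis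
  then have "bilinear_map s1 s2 (*) (\<lambda>x y. f1 x * f2 y)"
    unfolding bilinear_map_def Vector_Spaces.linear_iff by (auto simp: algebra_simps)
  then obtain \<Phi> where \<Phi>: "Vector_Spaces.linear sW (*) \<Phi>" "\<And>x y. \<Phi> (tens x y) = f1 x * f2 y"
    using assms(1) unfolding is_tensor_product_def by blast
  interpret vector_space_pair sW "(*) :: complex \<Rightarrow> complex \<Rightarrow> complex"
    using \<Phi>(1) unfolding Vector_Spaces.linear_iff vector_space_pair_def by blast
  have "\<Phi> (tens x y) \<noteq> \<Phi> 0"
    using \<Phi> f linear_0[OF \<Phi>(1)] by simp
  then show ?thesis
    by metis
qed

lemma simple_module_ann_set:
  assumes V1: "lie_module sL br s1 act1"
    and cond: "(simple_module s1 act1 UNIV \<and>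
                 (\<forall>v S. finite S \<longrightarrow> {a + b | a b. a \<in> ann act1 v \<and> b \<in> ann_set act2 S} = UNIV))
             \<or> (\<forall>S. finite S \<longrightarrow> simple_module s1 act1 (ann_set act2 S))"
    and "finite S"
  shows "simple_module s1 act1 (ann_set act2 S)"
  using cond
proof (elim disjE conjE)
  assume simple1: "simple_module s1 act1 UNIV"
    and decompose: "\<forall>v S. finite S \<longrightarrow> {a + b | a b. a \<in> ann act1 v \<and> b \<in> ann_set act2 S} = UNIV"
  have "\<forall>a b v. act1 (a + b) v = act1 a v + act1 b v"
    using V1 unfolding lie_module_def bilinear_map_def Vector_Spaces.linear_iff by blast
  then show ?thesis
    using simple1 by (rule simple_module_if_ann_sum_eq_UNIV) (use decompose \<open>finite S\<close> in blast)
next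
  assume "\<forall>S. finite S \<longrightarrow> simple_module s1 act1 (ann_set act2 S)"
  then show ?thesis
    using \<open>finite S\<close> by blast
qed

theorem theorem7:
  fixes sL :: "complex \<Rightarrow> 'l::ab_group_add \<Rightarrow> 'l" and br :: "'l \<Rightarrow> 'l \<Rightarrow> 'l"
    and s1 :: "complex \<Rightarrow> 'v1::ab_group_add \<Rightarrow> 'v1" and act1 :: "'l \<Rightarrow> 'v1 \<Rightarrow> 'v1"
    and s2 :: "complex \<Rightarrow> 'v2::ab_group_add \<Rightarrow> 'v2" and act2 :: "'l \<Rightarrow> 'v2 \<Rightarrow> 'v2"
    and sW :: "complex \<Rightarrow> 'w::ab_group_add \<Rightarrow> 'w" and tens :: "'v1 \<Rightarrow> 'v2 \<Rightarrow> 'w"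
    and actW :: "'l \<Rightarrow> 'w \<Rightarrow> 'w"
  assumes L: "lie_algebra sL br" and cb: "countable_basis sL"
    and V1: "lie_module sL br s1 act1" and V2: "lie_module sL br s2 act2"
    and W: "is_tensor_product s1 s2 sW tens"
    and actW_lin: "\<forall>g. Vector_Spaces.linear sW sW (actW g)"
    and actW_tens: "\<forall>g v w. actW g (tens v w) = tens (act1 g v) w + tens v (act2 g w)"
    and cond: "(simple_module s1 act1 UNIV \<and>
                 (\<forall>v S. finite S \<longrightarrow>
                    {a + b | a b. a \<in> ann act1 v \<and> b \<in> ann_set act2 S} = UNIV))
             \<or> (\<forall>S. finite S \<longrightarrow> simple_module s1 act1 (ann_set act2 S))"
  shows "(\<forall>U. submodule sW actW UNIV U \<longrightarrow>
            (\<exists>V2'. submodule s2 act2 UNIV V2' \<and>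
                   U = module.span sW {tens v w | v w. w \<in> V2'}))
       \<and> (simple_module s1 act1 UNIV \<and> simple_module s2 act2 UNIV
            \<longrightarrow> simple_module sW actW UNIV)"
proof -
  have vsL: "vector_space sL" and vs1: "vector_space s1" and vs2: "vector_space s2"
    and bilinear1: "bilinear_map sL s1 s1 act1"
    using L V1 V2 unfolding lie_algebra_def lie_module_def by blast+
  have simple_ann: "\<forall>S. finite S \<longrightarrow> simple_module s1 act1 (ann_set act2 S)"
    by (intro allI impI simple_module_ann_set[OF V1 cond])
  have simple1: "simple_module s1 act1 UNIV"
    using simple_ann[rule_format, of "{}"] by (simp add: ann_set_def)
  obtain B where "countable B" "module.span sL B = UNIV"
    using cb unfolding countable_basis_def by blast
  then obtain C where C: "countable C" "module.span s1 C = UNIV"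
    using countable_span_if_simple_module[OF vsL _ _ bilinear1 simple1] by blast
  interpret tensor_of_modules s1 s2 sW act1 act2 tens actW
    using vs1 vs2 W actW_lin actW_tens bilinear1
    unfolding tensor_of_modules_def tensor_of_modules_axioms_def is_tensor_product_def bilinear_map_def
    by (intro conjI) simp_all
  show ?thesis
  proof (intro conjI allI impI)
    fix U assume U: "submodule sW actW UNIV U"
    show "\<exists>V2'. submodule s2 act2 UNIV V2' \<and> U = W.span {tens v w | v w. w \<in> V2'}"
      using submodule_right_factor[OF U] submodule_eq_span_right_factor[OF U C simple_ann]
      by (intro exI[where x = "right_factor U"] conjI)
  next
    assume "simple_module s1 act1 UNIV \<and> simple_module s2 act2 UNIV"
    then obtain x :: 'v1 and y :: 'v2 where "x \<noteq> 0" "y \<noteq> 0" and simple2: "simple_module s2 act2 UNIV"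
      unfolding simple_module_def by blast
    then show "simple_module sW actW UNIV"
      by (intro simple_module_tensor[OF C simple_ann simple2] tens_neq_0_if_tensor_product[OF W vs1 vs2])
  qed
qed

end
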